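(* Let $N\ge1$, $M\ge N$, $K=N+M$, $\sigma>0$, $\bm S_{\rm enc}\in{\rm Sp}(2K,\mathbb R)$, and let $\bm\Lambda_d\in{\rm Sp}(2N,\mathbb R)$, $\bm\Lambda_a\in{\rm Sp}(2M,\mathbb R)$, $G_1,\dots,G_N\ge1$ be such that $(\bm\Lambda_d\oplus\bm\Lambda_a)\bm S_{\rm enc}^{-1}\bm S_{\rm enc}^{-\top}(\bm\Lambda_d\oplus\bm\Lambda_a)^\top=\bm T_{\bm G}\bm T_{\bm G}^\top$. Let $\bm\xi\sim\mathcal N(0,\sigma^2\bm I_{2K})$ and $\bm y=(\bm y_d,\bm y_a)=(\bm\Lambda_d\oplus\bm\Lambda_a)\bm S_{\rm enc}^{-1}\bm\xi$ with $\bm y_d\in\mathbb R^{2N}$, $\bm y_a\in\mathbb R^{2M}$. Then for every measurable $\bm f:\mathbb R^{2M}\to\mathbb R^{2N}$, $$\mathbb E\big[\|\bm y_d-\bm f(\bm y_a)\|^2\big]\ \ge\ \sum_{i=1}^N\frac{2\sigma^2}{2G_i-1}.$$ Consequently, the residual data error of any Gaussian-encoded oscillator-to-oscillator code (with any ancilla state and any decoder, expressed in this frame) cannot be made arbitrarily small at bounded gains, regardless of the number $M$ of ancilla modes.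
   Context: Phase-space vectors ordered $(q_1,p_1,\dots)$; $\bm\Omega=\bigoplus\begin{pmatrix}0&1\\-1&0\end{pmatrix}$; ${\rm Sp}(2n,\mathbb R)=\{\bm S:\bm S\bm\Omega\bm S^\top=\bm\Omega\}$. The first $N$ modes are data modes, the last $M$ ancilla modes. $\bm S_G=\begin{pmatrix}\sqrt G\bm I_2&\sqrt{G-1}\bm Z\\ \sqrt{G-1}\bm Z&\sqrt G\bm I_2\end{pmatrix}$ with $\bm Z={\rm diag}(1,-1)$, $G\ge1$; $\bm T_{\bm G}\in{\rm Sp}(2K,\mathbb R)$ acts as $\bm S_{G_i}$ on the pair (data mode $i$, ancilla mode $i$) for $i\le N$ and as the identity on ancilla modes $N+1,\dots,M$. (Such $\bm\Lambda_d,\bm\Lambda_a,G_i$ always exist.) *)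

theory Defs
  imports "HOL-Probability.Probability" "Jordan_Normal_Form.Matrix"
begin

text \<open>Phase-space coordinates are indexed from 0: mode k occupies coordinates 2k (q) and 2k+1 (p).
  The standard symplectic form Omega = direct sum of n copies of [[0,1],[-1,0]].\<close>
definition Omega :: "nat \<Rightarrow> real mat" where
  "Omega n = mat (2*n) (2*n) (\<lambda>(i,j).
     if even i \<and> j = i + 1 then 1
     else if odd i \<and> i = j + 1 then -1 else 0)"

definition symplectic :: "nat \<Rightarrow> real mat \<Rightarrow> bool" where
  "symplectic n S \<longleftrightarrow> S \<in> carrier_mat (2*n) (2*n) \<and> S * Omega n * transpose_mat S = Omega n"

definition dsum :: "real mat \<Rightarrow> real mat \<Rightarrow> real mat" where
  "dsum A B = four_block_mat A (0\<^sub>m (dim_row A) (dim_col B)) (0\<^sub>m (dim_row B) (dim_col A)) B"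

text \<open>Sign of the Z = diag(1,-1) entry on component a (0 = q, 1 = p).\<close>
definition zsgn :: "nat \<Rightarrow> real" where
  "zsgn a = (if a = 0 then 1 else -1)"

text \<open>T_G on N data modes followed by M ancilla modes (K = N + M): acts as the two-mode squeezer
  S_{G_i} on (data mode i, ancilla mode i) for i < N and as identity on ancilla modes N..M-1.
  Data coordinate r < 2N belongs to data mode r div 2; ancilla coordinate 2N + s belongs to
  ancilla mode s div 2.\<close>
definition TG :: "nat \<Rightarrow> nat \<Rightarrow> (nat \<Rightarrow> real) \<Rightarrow> real mat" where
  "TG N M G = mat (2*(N+M)) (2*(N+M)) (\<lambda>(r,c).
     if r < 2*N then
       (if c = r then sqrt (G (r div 2))
        else if c = 2*N + r then sqrt (G (r div 2) - 1) * zsgn (r mod 2) else 0)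
     else if r < 4*N then
       (if c = r then sqrt (G ((r - 2*N) div 2))
        else if c = r - 2*N then sqrt (G ((r - 2*N) div 2) - 1) * zsgn (r mod 2) else 0)
     else (if c = r then 1 else 0))"

end

theory Submission
  imports Defs
begin

text \<open>Put \<open>L = (\<Lambda>\<^sub>d \<oplus> \<Lambda>\<^sub>a) S_inv\<close>, so that \<open>y = L \<xi>\<close> and \<open>L L\<^sup>T = T\<^sub>G T\<^sub>G\<^sup>T\<close>. For a data coordinate
  \<open>i\<close> of mode \<open>m\<close> let \<open>x\<close> be row \<open>i\<close> of \<open>L\<close> and \<open>y\<^sub>j\<close> the ancilla rows. The Gram matrix of
  \<open>T\<^sub>G\<close> gives \<open>|x|\<^sup>2 = |y\<^sub>i|\<^sup>2 = 2G\<^sub>m - 1\<close>, \<open>\<langle>x,y\<^sub>i\<rangle>\<^sup>2 = 4G\<^sub>m(G\<^sub>m - 1)\<close>, and \<open>x\<close>, \<open>y\<^sub>i\<close> are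
  orthogonal to every other ancilla row. Hence \<open>u = x - (\<langle>x,y\<^sub>i\<rangle>/|y\<^sub>i|\<^sup>2) y\<^sub>i\<close> is orthogonal to all
  ancilla rows and \<open>|u|\<^sup>2 = 1/(2G\<^sub>m - 1)\<close>. For isotropic Gaussian \<open>\<xi>\<close>, \<open>u\<cdot>\<xi>\<close> is then independent
  of the ancilla readout, so the error of coordinate \<open>i\<close> is at least \<open>Var(u\<cdot>\<xi>) = \<sigma>\<^sup>2|u|\<^sup>2\<close>.
  Independence is made explicit by the change of variables \<open>\<xi>\<^sub>k\<^sub>0 = t\<close>,
  \<open>\<xi>\<^sub>j = \<eta>\<^sub>j + t u\<^sub>j/u\<^sub>k\<^sub>0\<close> (\<open>j \<noteq> k\<^sub>0\<close>): the ancilla readout no longer depends on \<open>t\<close>, and the bound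
  reduces to a one-dimensional Gaussian second-moment inequality.\<close>

lemma has_bochner_integral_normal_density_affine_sq:
  fixes m s \<alpha> \<beta> :: real
  assumes "s > 0"
  shows "has_bochner_integral lborel (\<lambda>t. normal_density m s t * (\<alpha>*t+\<beta>)\<^sup>2) (\<alpha>\<^sup>2 * s\<^sup>2 + (\<alpha>*m+\<beta>)\<^sup>2)"
proof -
  have second: "has_bochner_integral lborel (\<lambda>x. normal_density m s x * (x - m) ^ 2) (s\<^sup>2)"
  proof -
    have "fact (2*1) / ((2 / s\<^sup>2)^1 * fact 1) = (s\<^sup>2::real)" using assms by simp
    with normal_moment_even[OF assms, of m 1] show ?thesis by (simp only: mult_1_right)
  qed
  have first: "has_bochner_integral lborel (\<lambda>x. normal_density m s x * (x - m)) 0"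
    using normal_moment_odd[OF assms, of m 0] by simp
  have mass: "has_bochner_integral lborel (\<lambda>x. normal_density m s x) 1"
    using integrable_normal_density[OF assms] integral_normal_density[OF assms]
    by (metis has_bochner_integral_integrable integrable.cases has_bochner_integral_integral_eq)
  have "has_bochner_integral lborel (\<lambda>x. \<alpha>\<^sup>2 * (normal_density m s x * (x - m) ^ 2)
     + (2*\<alpha>*(\<alpha>*m+\<beta>)) * (normal_density m s x * (x - m)) + (\<alpha>*m+\<beta>)\<^sup>2 * normal_density m s x)
     (\<alpha>\<^sup>2 * s\<^sup>2 + (2*\<alpha>*(\<alpha>*m+\<beta>)) * 0 + (\<alpha>*m+\<beta>)\<^sup>2 * 1)"
    by (intro has_bochner_integral_add has_bochner_integral_mult_right second first mass)
  moreover have "(\<lambda>x. \<alpha>\<^sup>2 * (normal_density m s x * (x - m) ^ 2)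
     + (2*\<alpha>*(\<alpha>*m+\<beta>)) * (normal_density m s x * (x - m)) + (\<alpha>*m+\<beta>)\<^sup>2 * normal_density m s x)
     = (\<lambda>t. normal_density m s t * (\<alpha>*t+\<beta>)\<^sup>2)"
    by (auto simp: fun_eq_iff power2_eq_square algebra_simps)
  ultimately show ?thesis by simp
qed

text \<open>The weight \<open>C exp(-(a t\<^sup>2 + 2bt + c)/(2\<sigma>\<^sup>2))\<close> is a multiple of the normal density with
  variance \<open>\<sigma>\<^sup>2/a\<close>, whose second moment of \<open>\<alpha>t + \<beta>\<close> is at least \<open>\<alpha>\<^sup>2\<sigma>\<^sup>2/a\<close>.\<close>
lemma nn_integral_gaussian_weight_affine_sq_ge:
  fixes \<alpha> \<beta> a b c C \<sigma> :: real
  assumes "\<sigma> > 0" "a > 0" "C \<ge> 0"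
  shows "ennreal (\<alpha>\<^sup>2 * \<sigma>\<^sup>2 / a) * (\<integral>\<^sup>+t. ennreal (C * exp (-(a*t\<^sup>2 + 2*b*t + c)/(2*\<sigma>\<^sup>2))) \<partial>lborel)
     \<le> (\<integral>\<^sup>+t. ennreal (C * ((\<alpha>*t+\<beta>)\<^sup>2 * exp (-(a*t\<^sup>2 + 2*b*t + c)/(2*\<sigma>\<^sup>2)))) \<partial>lborel)"
proof -
  define s where "s = \<sigma> / sqrt a"
  define m where "m = -b/a"
  define D where "D = C * exp(-(c - b\<^sup>2/a)/(2*\<sigma>\<^sup>2)) * sqrt(2 * pi * s\<^sup>2)"
  have s: "s > 0" using assms by (simp add: s_def)
  have s2: "s\<^sup>2 = \<sigma>\<^sup>2 / a" using assms by (simp add: s_def power_divide)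
  have D0: "D \<ge> 0" using assms by (simp add: D_def)
  have weight: "C * exp (-(a*t\<^sup>2 + 2*b*t + c)/(2*\<sigma>\<^sup>2)) = D * normal_density m s t" for t
  proof -
    have "D * normal_density m s t = C * (exp(-(c - b\<^sup>2/a)/(2*\<sigma>\<^sup>2)) * exp (-(t - m)\<^sup>2/ (2 * s\<^sup>2)))"
      using s by (simp add: D_def normal_density_def)
    also have "exp(-(c - b\<^sup>2/a)/(2*\<sigma>\<^sup>2)) * exp (-(t - m)\<^sup>2/ (2 * s\<^sup>2)) = exp (-(a*t\<^sup>2 + 2*b*t + c)/(2*\<sigma>\<^sup>2))"
      unfolding exp_add[symmetric] s2 m_def using assms
      by (intro arg_cong[where f=exp]) (simp add: field_simps power2_eq_square)
    finally show ?thesis by simp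
  qed
  have mass: "(\<integral>\<^sup>+t. ennreal (C * exp (-(a*t\<^sup>2 + 2*b*t + c)/(2*\<sigma>\<^sup>2))) \<partial>lborel) = ennreal D"
  proof -
    have "(\<integral>\<^sup>+t. ennreal (C * exp (-(a*t\<^sup>2 + 2*b*t + c)/(2*\<sigma>\<^sup>2))) \<partial>lborel)
       = (\<integral>\<^sup>+t. ennreal D * ennreal (normal_density m s t) \<partial>lborel)"
      by (rule nn_integral_cong) (simp only: weight ennreal_mult[OF D0 normal_density_nonneg])
    also have "\<dots> = ennreal D * (\<integral>\<^sup>+t. ennreal (normal_density m s t) \<partial>lborel)"
      by (simp add: nn_integral_cmult)
    also have "(\<integral>\<^sup>+t. ennreal (normal_density m s t) \<partial>lborel) = 1"
      using s by (subst nn_integral_eq_integral) auto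
    finally show ?thesis by simp
  qed
  have moment: "(\<integral>\<^sup>+t. ennreal (C * ((\<alpha>*t+\<beta>)\<^sup>2 * exp (-(a*t\<^sup>2 + 2*b*t + c)/(2*\<sigma>\<^sup>2)))) \<partial>lborel)
     = ennreal D * ennreal (\<alpha>\<^sup>2 * s\<^sup>2 + (\<alpha>*m+\<beta>)\<^sup>2)"
  proof -
    have "(\<integral>\<^sup>+t. ennreal (C * ((\<alpha>*t+\<beta>)\<^sup>2 * exp (-(a*t\<^sup>2 + 2*b*t + c)/(2*\<sigma>\<^sup>2)))) \<partial>lborel)
       = (\<integral>\<^sup>+t. ennreal D * ennreal (normal_density m s t * (\<alpha>*t+\<beta>)\<^sup>2) \<partial>lborel)"
    proof (rule nn_integral_cong)
      fix t
      have "C * ((\<alpha>*t+\<beta>)\<^sup>2 * exp (-(a*t\<^sup>2 + 2*b*t + c)/(2*\<sigma>\<^sup>2))) = D * (normal_density m s t * (\<alpha>*t+\<beta>)\<^sup>2)"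
        using weight[of t] by (simp add: algebra_simps)
      then show "ennreal (C * ((\<alpha>*t+\<beta>)\<^sup>2 * exp (-(a*t\<^sup>2 + 2*b*t + c)/(2*\<sigma>\<^sup>2))))
          = ennreal D * ennreal (normal_density m s t * (\<alpha>*t+\<beta>)\<^sup>2)"
        by (simp only: ennreal_mult[OF D0 mult_nonneg_nonneg[OF normal_density_nonneg zero_le_power2]])
    qed
    also have "\<dots> = ennreal D * (\<integral>\<^sup>+t. ennreal (normal_density m s t * (\<alpha>*t+\<beta>)\<^sup>2) \<partial>lborel)"
      by (simp add: nn_integral_cmult)
    also have "(\<integral>\<^sup>+t. ennreal (normal_density m s t * (\<alpha>*t+\<beta>)\<^sup>2) \<partial>lborel) = ennreal (\<alpha>\<^sup>2 * s\<^sup>2 + (\<alpha>*m+\<beta>)\<^sup>2)"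
      using has_bochner_integral_normal_density_affine_sq[OF s, of m \<alpha> \<beta>]
      by (subst nn_integral_eq_integral) (auto simp: has_bochner_integral_iff)
    finally show ?thesis .
  qed
  have "D * (\<alpha>\<^sup>2 * s\<^sup>2) \<le> D * (\<alpha>\<^sup>2 * s\<^sup>2 + (\<alpha>*m+\<beta>)\<^sup>2)"
    using D0 by (intro mult_left_mono) auto
  then have "\<alpha>\<^sup>2 * \<sigma>\<^sup>2 / a * D \<le> D * (\<alpha>\<^sup>2 * s\<^sup>2 + (\<alpha>*m+\<beta>)\<^sup>2)"
    unfolding s2 by (simp add: mult.commute)
  moreover have "0 \<le> \<alpha>\<^sup>2 * \<sigma>\<^sup>2 / a" using assms by simp
  moreover have "0 \<le> \<alpha>\<^sup>2 * s\<^sup>2 + (\<alpha>*m+\<beta>)\<^sup>2" by simp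
  ultimately show ?thesis unfolding mass moment
    by (simp only: ennreal_mult[symmetric] D0 ennreal_leI)
qed

abbreviation centered_normal :: "real \<Rightarrow> real measure" where
  "centered_normal \<sigma> \<equiv> density lborel (normal_density 0 \<sigma>)"

lemma sets_PiM_centered_normal[measurable_cong]:
  "sets (PiM J (\<lambda>_. centered_normal \<sigma>)) = sets (PiM J (\<lambda>_. borel::real measure))"
  by (rule sets_PiM_cong) auto

lemma product_sigma_finite_centered_normal:
  assumes "\<sigma> > 0" shows "product_sigma_finite (\<lambda>_::nat. centered_normal \<sigma>)"
proof -
  interpret prob_space "centered_normal \<sigma>" using assms by (rule prob_space_normal_density)
  show ?thesis by unfold_locales
qed

lemma nn_integral_centered_normal_translate:
  assumes "g \<in> borel_measurable borel"
  shows "(\<integral>\<^sup>+y. g y \<partial>centered_normal \<sigma>)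
    = (\<integral>\<^sup>+y. ennreal (normal_density 0 \<sigma> (s + y)) * g (s + y) \<partial>lborel)"
proof -
  have "(\<integral>\<^sup>+y. g y \<partial>centered_normal \<sigma>) = (\<integral>\<^sup>+y. ennreal (normal_density 0 \<sigma> y) * g y \<partial>lborel)"
    using assms by (subst nn_integral_density) auto
  also have "\<dots> = (\<integral>\<^sup>+y. ennreal (normal_density 0 \<sigma> (s + 1 * y)) * g (s + 1 * y) \<partial>lborel)"
    using assms by (subst nn_integral_real_affine[where c=1 and t=s]) auto
  finally show ?thesis by simp
qed

lemma nn_integral_PiM_centered_normal_shift:
  fixes \<sigma> t :: real and c :: "nat \<Rightarrow> real" and J :: "nat set"
  assumes \<sigma>: "\<sigma> > 0" and J: "finite J"
    and F: "F \<in> borel_measurable (PiM J (\<lambda>_. borel))"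
  shows "(\<integral>\<^sup>+x. F x \<partial>PiM J (\<lambda>_. centered_normal \<sigma>)) =
    (\<integral>\<^sup>+\<eta>. F (\<lambda>j\<in>J. \<eta> j + t * c j) * (\<Prod>j\<in>J. ennreal (normal_density 0 \<sigma> (\<eta> j + t * c j)))
      \<partial>PiM J (\<lambda>_. lborel))"
  using J F
proof (induction J arbitrary: F rule: finite_induct)
  case empty
  show ?case by (simp add: PiM_empty nn_integral_count_space_finite)
next
  case (insert a J)
  interpret P: product_sigma_finite "\<lambda>_::nat. centered_normal \<sigma>"
    by (rule product_sigma_finite_centered_normal[OF \<sigma>])
  interpret Q: product_sigma_finite "\<lambda>_::nat. lborel::real measure"
    by unfold_locales
  note [measurable] = insert.prems
  define H where "H x = (\<integral>\<^sup>+y. ennreal (normal_density 0 \<sigma> (t * c a + y)) * F (x(a := t * c a + y)) \<partial>lborel)" for x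
  have "(\<lambda>p. (fst p)(a := t * c a + snd p))
      \<in> measurable (PiM J (\<lambda>_. borel) \<Otimes>\<^sub>M lborel) (PiM (insert a J) (\<lambda>_. borel))"
    by (rule measurable_fun_upd[where J=J]) auto
  from measurable_compose[OF this insert.prems]
  have "H \<in> borel_measurable (PiM J (\<lambda>_. borel))"
    unfolding H_def by (intro lborel.borel_measurable_nn_integral) (auto simp: case_prod_beta')
  note H = insert.IH[OF this]
  have "(\<integral>\<^sup>+x. F x \<partial>PiM (insert a J) (\<lambda>_. centered_normal \<sigma>))
      = (\<integral>\<^sup>+x. (\<integral>\<^sup>+y. F (x(a := y)) \<partial>centered_normal \<sigma>) \<partial>PiM J (\<lambda>_. centered_normal \<sigma>))"
    using insert by (subst P.product_nn_integral_insert) auto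
  also have "\<dots> = (\<integral>\<^sup>+x. H x \<partial>PiM J (\<lambda>_. centered_normal \<sigma>))"
  proof (rule nn_integral_cong)
    fix x assume "x \<in> space (PiM J (\<lambda>_. centered_normal \<sigma>))"
    then have "(\<lambda>y. F (x(a := y))) \<in> borel_measurable borel"
      using measurable_compose[OF measurable_component_update[of x J "\<lambda>_. borel" a] insert.prems]
        insert.hyps by (simp add: space_PiM)
    then show "(\<integral>\<^sup>+y. F (x(a := y)) \<partial>centered_normal \<sigma>) = H x"
      unfolding H_def by (rule nn_integral_centered_normal_translate)
  qed
  also have "\<dots> = (\<integral>\<^sup>+\<eta>. H (\<lambda>j\<in>J. \<eta> j + t * c j) * (\<Prod>j\<in>J. ennreal (normal_density 0 \<sigma> (\<eta> j + t * c j)))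
      \<partial>PiM J (\<lambda>_. lborel))"
    by (rule H)
  also have "\<dots> = (\<integral>\<^sup>+\<eta>. (\<integral>\<^sup>+y. F (\<lambda>j\<in>insert a J. (\<eta>(a:=y)) j + t * c j)
      * (\<Prod>j\<in>insert a J. ennreal (normal_density 0 \<sigma> ((\<eta>(a:=y)) j + t * c j))) \<partial>lborel) \<partial>PiM J (\<lambda>_. lborel))"
  proof (rule nn_integral_cong)
    fix \<eta> :: "nat \<Rightarrow> real"
    have point: "(\<lambda>j\<in>insert a J. (\<eta>(a:=y)) j + t * c j) = (\<lambda>j\<in>J. \<eta> j + t * c j)(a := t * c a + y)" for y
      using insert.hyps by (auto simp: fun_eq_iff)
    have "(\<Prod>j\<in>J. ennreal (normal_density 0 \<sigma> ((\<eta>(a:=y)) j + t * c j)))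
        = (\<Prod>j\<in>J. ennreal (normal_density 0 \<sigma> (\<eta> j + t * c j)))" for y
      using insert.hyps by (intro prod.cong) auto
    then have density: "(\<Prod>j\<in>insert a J. ennreal (normal_density 0 \<sigma> ((\<eta>(a:=y)) j + t * c j))) =
        ennreal (normal_density 0 \<sigma> (t * c a + y)) * (\<Prod>j\<in>J. ennreal (normal_density 0 \<sigma> (\<eta> j + t * c j)))" for y
      using insert.hyps by (simp add: add.commute)
    show "H (\<lambda>j\<in>J. \<eta> j + t * c j) * (\<Prod>j\<in>J. ennreal (normal_density 0 \<sigma> (\<eta> j + t * c j))) =
       (\<integral>\<^sup>+y. F (\<lambda>j\<in>insert a J. (\<eta>(a:=y)) j + t * c j)
         * (\<Prod>j\<in>insert a J. ennreal (normal_density 0 \<sigma> ((\<eta>(a:=y)) j + t * c j))) \<partial>lborel)"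
      unfolding point density H_def
      by (subst nn_integral_multc[symmetric]) (auto simp: mult_ac intro!: nn_integral_cong)
  qed
  also have "\<dots> = (\<integral>\<^sup>+\<eta>. F (\<lambda>j\<in>insert a J. \<eta> j + t * c j)
      * (\<Prod>j\<in>insert a J. ennreal (normal_density 0 \<sigma> (\<eta> j + t * c j))) \<partial>PiM (insert a J) (\<lambda>_. lborel))"
    using insert by (subst Q.product_nn_integral_insert) auto
  finally show ?case .
qed

definition line_point :: "nat set \<Rightarrow> nat \<Rightarrow> (nat \<Rightarrow> real) \<Rightarrow> (nat \<Rightarrow> real) \<Rightarrow> real \<Rightarrow> nat \<Rightarrow> real"
  where "line_point I k0 c \<eta> t = (\<lambda>j\<in>I-{k0}. \<eta> j + t * c j)(k0 := t)"

definition line_density :: "real \<Rightarrow> nat set \<Rightarrow> nat \<Rightarrow> (nat \<Rightarrow> real) \<Rightarrow> (nat \<Rightarrow> real) \<Rightarrow> real \<Rightarrow> real"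
  where "line_density \<sigma> I k0 c \<eta> t
    = normal_density 0 \<sigma> t * (\<Prod>j\<in>I-{k0}. normal_density 0 \<sigma> (\<eta> j + t * c j))"

text \<open>Integrate \<open>\<xi>\<^sub>k\<^sub>0\<close> out first, then shift the remaining coordinates by \<open>t c\<close> and
  exchange the order of integration.\<close>
lemma nn_integral_PiM_centered_normal_lines:
  fixes \<sigma> :: real and I :: "nat set" and c :: "nat \<Rightarrow> real"
  assumes \<sigma>: "\<sigma> > 0" and I: "finite I" "k0 \<in> I"
    and F[measurable]: "F \<in> borel_measurable (PiM I (\<lambda>_. borel))"
  shows "(\<integral>\<^sup>+\<xi>. F \<xi> \<partial>PiM I (\<lambda>_. centered_normal \<sigma>)) =
    (\<integral>\<^sup>+\<eta>. (\<integral>\<^sup>+t. F (line_point I k0 c \<eta> t) * ennreal (line_density \<sigma> I k0 c \<eta> t) \<partial>lborel)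
      \<partial>PiM (I-{k0}) (\<lambda>_. lborel))"
proof -
  define J where "J = I - {k0}"
  have IJ: "I = insert k0 J" and kJ: "k0 \<notin> J" and fJ: "finite J" using I by (auto simp: J_def)
  interpret P: product_sigma_finite "\<lambda>_::nat. centered_normal \<sigma>"
    by (rule product_sigma_finite_centered_normal[OF \<sigma>])
  interpret PJ: finite_product_sigma_finite "\<lambda>_::nat. centered_normal \<sigma>" J
    using fJ by unfold_locales
  interpret QJ: finite_product_sigma_finite "\<lambda>_::nat. lborel::real measure" J
    using fJ by unfold_locales
  interpret QL: pair_sigma_finite "PiM J (\<lambda>_::nat. lborel::real measure)" "lborel::real measure"
    by unfold_locales
  let ?\<Phi> = "line_point I k0 c"
  define \<rho> where "\<rho> \<eta> t = (\<Prod>j\<in>J. ennreal (normal_density 0 \<sigma> (\<eta> j + t * c j)))" for \<eta> t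
  have F': "F \<in> borel_measurable (PiM (insert k0 J) (\<lambda>_. borel))" using F IJ by simp
  have "(\<lambda>p. (snd p)(k0 := fst p))
      \<in> measurable (lborel \<Otimes>\<^sub>M PiM J (\<lambda>_. centered_normal \<sigma>)) (PiM (insert k0 J) (\<lambda>_. borel))"
    by (rule measurable_fun_upd[where J=J]) auto
  note upd = measurable_compose[OF this F']
  have "(\<lambda>p. ?\<Phi> (fst p) (snd p)) \<in> measurable (PiM J (\<lambda>_. lborel) \<Otimes>\<^sub>M lborel) (PiM (insert k0 J) (\<lambda>_. borel))"
    unfolding line_point_def J_def[symmetric] by (rule measurable_fun_upd[where J=J]) auto
  note line = measurable_compose[OF this F']
  have "(\<integral>\<^sup>+\<xi>. F \<xi> \<partial>PiM I (\<lambda>_. centered_normal \<sigma>))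
      = (\<integral>\<^sup>+t. (\<integral>\<^sup>+x. F (x(k0 := t)) \<partial>PiM J (\<lambda>_. centered_normal \<sigma>)) \<partial>centered_normal \<sigma>)"
    unfolding IJ using fJ kJ F' by (subst P.product_nn_integral_insert_rev) auto
  also have "\<dots> = (\<integral>\<^sup>+t. ennreal (normal_density 0 \<sigma> t)
      * (\<integral>\<^sup>+x. F (x(k0 := t)) \<partial>PiM J (\<lambda>_. centered_normal \<sigma>)) \<partial>lborel)"
    using PJ.borel_measurable_nn_integral[of "\<lambda>t x. F (x(k0 := t))" lborel] upd
    by (intro nn_integral_density) (auto simp: case_prod_beta')
  also have "\<dots> = (\<integral>\<^sup>+t. (\<integral>\<^sup>+\<eta>. ennreal (normal_density 0 \<sigma> t) * (F (?\<Phi> \<eta> t) * \<rho> \<eta> t)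
      \<partial>PiM J (\<lambda>_. lborel)) \<partial>lborel)"
  proof (rule nn_integral_cong)
    fix t :: real
    have "(\<lambda>x. F (x(k0 := t))) \<in> borel_measurable (PiM J (\<lambda>_. borel))"
      using measurable_compose[OF measurable_fun_upd[where J=J and I="insert k0 J" and f="\<lambda>x. x"
          and h="\<lambda>_. t" and M="\<lambda>_. borel"] F'] by auto
    note shift = nn_integral_PiM_centered_normal_shift[OF \<sigma> fJ this, of t c]
    have "(\<lambda>\<eta>. ?\<Phi> \<eta> t) \<in> measurable (PiM J (\<lambda>_. lborel)) (PiM (insert k0 J) (\<lambda>_. borel))"
      unfolding line_point_def J_def[symmetric] by (rule measurable_fun_upd[where J=J]) auto
    from measurable_compose[OF this F']
    have "(\<lambda>\<eta>. F (?\<Phi> \<eta> t) * \<rho> \<eta> t) \<in> borel_measurable (PiM J (\<lambda>_. lborel))"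
      unfolding \<rho>_def by measurable
    then show "ennreal (normal_density 0 \<sigma> t) * (\<integral>\<^sup>+x. F (x(k0 := t)) \<partial>PiM J (\<lambda>_. centered_normal \<sigma>))
        = (\<integral>\<^sup>+\<eta>. ennreal (normal_density 0 \<sigma> t) * (F (?\<Phi> \<eta> t) * \<rho> \<eta> t) \<partial>PiM J (\<lambda>_. lborel))"
      unfolding shift line_point_def J_def[symmetric] \<rho>_def by (simp add: nn_integral_cmult)
  qed
  also have "\<dots> = (\<integral>\<^sup>+\<eta>. (\<integral>\<^sup>+t. ennreal (normal_density 0 \<sigma> t) * (F (?\<Phi> \<eta> t) * \<rho> \<eta> t) \<partial>lborel)
      \<partial>PiM J (\<lambda>_. lborel))"
    using line unfolding \<rho>_def by (intro QL.Fubini') (simp add: case_prod_beta')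
  also have "\<dots> = (\<integral>\<^sup>+\<eta>. (\<integral>\<^sup>+t. F (?\<Phi> \<eta> t) * ennreal (line_density \<sigma> I k0 c \<eta> t) \<partial>lborel)
      \<partial>PiM J (\<lambda>_. lborel))"
  proof -
    have "ennreal (line_density \<sigma> I k0 c \<eta> t) = ennreal (normal_density 0 \<sigma> t) * \<rho> \<eta> t" for \<eta> t
      unfolding line_density_def \<rho>_def J_def by (simp add: ennreal_mult prod_ennreal prod_nonneg)
    then show ?thesis by (simp add: mult_ac)
  qed
  finally show ?thesis unfolding J_def .
qed

lemma sum_line_point:
  fixes u w \<eta> :: "nat \<Rightarrow> real"
  assumes "finite I" "k0 \<in> I" "u k0 \<noteq> 0"
  shows "(\<Sum>k\<in>I. w k * line_point I k0 (\<lambda>j. u j / u k0) \<eta> t k)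
    = t / u k0 * (\<Sum>k\<in>I. w k * u k) + (\<Sum>j\<in>I-{k0}. w j * \<eta> j)"
proof -
  have split: "(\<Sum>k\<in>I. g k) = g k0 + (\<Sum>j\<in>I-{k0}. g j)" for g :: "nat \<Rightarrow> real"
    using assms by (simp add: sum.remove)
  have "(\<Sum>j\<in>I-{k0}. w j * line_point I k0 (\<lambda>j. u j / u k0) \<eta> t j)
      = (\<Sum>j\<in>I-{k0}. w j * \<eta> j) + t / u k0 * (\<Sum>j\<in>I-{k0}. w j * u j)"
    by (simp add: line_point_def algebra_simps sum.distrib sum_distrib_left sum_divide_distrib)
  moreover have "w k0 * t = t / u k0 * (w k0 * u k0)" using assms(3) by simp
  ultimately show ?thesis
    by (subst (1 2) split) (simp add: line_point_def algebra_simps)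
qed

lemma line_density_eq:
  fixes \<sigma> t :: real and k0 :: nat and c \<eta> :: "nat \<Rightarrow> real"
  assumes "finite I"
  defines "J \<equiv> I - {k0}"
  shows "line_density \<sigma> I k0 c \<eta> t
    = (1 / sqrt (2 * pi * \<sigma>\<^sup>2)) ^ (card J + 1)
      * exp (- ((1 + (\<Sum>j\<in>J. (c j)\<^sup>2)) * t\<^sup>2 + 2 * (\<Sum>j\<in>J. c j * \<eta> j) * t + (\<Sum>j\<in>J. (\<eta> j)\<^sup>2))
             / (2 * \<sigma>\<^sup>2))"
proof -
  define C where "C = 1 / sqrt (2 * pi * \<sigma>\<^sup>2)"
  have density: "normal_density 0 \<sigma> x = C * exp (- x\<^sup>2 / (2 * \<sigma>\<^sup>2))" for x
    unfolding normal_density_def C_def by simp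
  have "(\<Sum>j\<in>J. (\<eta> j + t * c j)\<^sup>2)
      = (\<Sum>j\<in>J. (c j)\<^sup>2) * t\<^sup>2 + 2 * (\<Sum>j\<in>J. c j * \<eta> j) * t + (\<Sum>j\<in>J. (\<eta> j)\<^sup>2)"
    by (simp add: power2_sum sum.distrib sum_distrib_left sum_distrib_right algebra_simps power_mult_distrib)
  then have "- t\<^sup>2 / (2 * \<sigma>\<^sup>2) + (\<Sum>j\<in>J. - (\<eta> j + t * c j)\<^sup>2 / (2 * \<sigma>\<^sup>2))
      = - ((1 + (\<Sum>j\<in>J. (c j)\<^sup>2)) * t\<^sup>2 + 2 * (\<Sum>j\<in>J. c j * \<eta> j) * t + (\<Sum>j\<in>J. (\<eta> j)\<^sup>2)) / (2 * \<sigma>\<^sup>2)"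
    by (simp add: sum_divide_distrib[symmetric] sum_negf add_divide_distrib[symmetric] algebra_simps)
  moreover have "line_density \<sigma> I k0 c \<eta> t
      = C ^ (card J + 1) * (exp (- t\<^sup>2 / (2 * \<sigma>\<^sup>2)) * exp (\<Sum>j\<in>J. - (\<eta> j + t * c j)\<^sup>2 / (2 * \<sigma>\<^sup>2)))"
    unfolding line_density_def J_def[symmetric] density using assms by (simp add: prod.distrib exp_sum)
  ultimately show ?thesis unfolding C_def by (simp add: exp_add[symmetric])
qed

text \<open>Along the line \<open>\<xi>\<^sub>k\<^sub>0 = t\<close>, \<open>\<xi>\<^sub>j = \<eta>\<^sub>j + t u\<^sub>j/u\<^sub>k\<^sub>0\<close> the readout \<open>A\<xi>\<close> is constant, \<open>u\<cdot>\<xi>\<close>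
  is affine in \<open>t\<close> with slope \<open>|u|\<^sup>2/u\<^sub>k\<^sub>0\<close>, and the Gaussian weight has variance
  \<open>\<sigma>\<^sup>2 u\<^sub>k\<^sub>0\<^sup>2/|u|\<^sup>2\<close> in \<open>t\<close>.\<close>
lemma nn_integral_line_residual_ge:
  fixes \<sigma> :: real and u \<eta> :: "nat \<Rightarrow> real" and A :: "nat \<Rightarrow> nat \<Rightarrow> real"
    and h :: "(nat \<Rightarrow> real) \<Rightarrow> real"
  assumes \<sigma>: "\<sigma> > 0" and k0: "k0 < n" and uk0: "u k0 \<noteq> 0"
    and orth: "\<And>j. j < m \<Longrightarrow> (\<Sum>k<n. A j k * u k) = 0"
  defines "c \<equiv> \<lambda>j. u j / u k0"
  shows "ennreal (\<sigma>\<^sup>2 * (\<Sum>k<n. (u k)\<^sup>2)) * (\<integral>\<^sup>+t. ennreal (line_density \<sigma> {..<n} k0 c \<eta> t) \<partial>lborel)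
    \<le> (\<integral>\<^sup>+t. ennreal (((\<Sum>k<n. u k * line_point {..<n} k0 c \<eta> t k)
                       + h (\<lambda>j\<in>{..<m}. \<Sum>k<n. A j k * line_point {..<n} k0 c \<eta> t k))\<^sup>2)
              * ennreal (line_density \<sigma> {..<n} k0 c \<eta> t) \<partial>lborel)"
proof -
  define J where "J = {..<n} - {k0}"
  define S where "S = (\<Sum>k<n. (u k)\<^sup>2)"
  define a where "a = 1 + (\<Sum>j\<in>J. (c j)\<^sup>2)"
  define b where "b = (\<Sum>j\<in>J. c j * \<eta> j)"
  define q where "q = (\<Sum>j\<in>J. (\<eta> j)\<^sup>2)"
  define C where "C = (1 / sqrt (2 * pi * \<sigma>\<^sup>2)) ^ (card J + 1)"
  define \<beta> where "\<beta> = (\<Sum>j\<in>J. u j * \<eta> j) + h (\<lambda>i\<in>{..<m}. \<Sum>j\<in>J. A i j * \<eta> j)"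
  have line_sum: "(\<Sum>k<n. w k * line_point {..<n} k0 c \<eta> t k)
      = t / u k0 * (\<Sum>k<n. w k * u k) + (\<Sum>j\<in>J. w j * \<eta> j)" for w t
    using sum_line_point[of "{..<n}" k0 u w \<eta> t] k0 uk0 unfolding c_def J_def by simp
  have readout: "(\<lambda>i\<in>{..<m}. \<Sum>k<n. A i k * line_point {..<n} k0 c \<eta> t k)
      = (\<lambda>i\<in>{..<m}. \<Sum>j\<in>J. A i j * \<eta> j)" for t
    using orth by (auto simp: line_sum)
  have "(\<Sum>k<n. u k * line_point {..<n} k0 c \<eta> t k) = S / u k0 * t + (\<Sum>j\<in>J. u j * \<eta> j)" for t
    unfolding line_sum S_def using uk0 by (simp add: power2_eq_square field_simps)
  then have residual: "((\<Sum>k<n. u k * line_point {..<n} k0 c \<eta> t k)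
      + h (\<lambda>j\<in>{..<m}. \<Sum>k<n. A j k * line_point {..<n} k0 c \<eta> t k))\<^sup>2 = (S / u k0 * t + \<beta>)\<^sup>2" for t
    unfolding \<beta>_def readout by (simp add: add.assoc)
  have density: "line_density \<sigma> {..<n} k0 c \<eta> t = C * exp (-(a*t\<^sup>2 + 2*b*t + q)/(2*\<sigma>\<^sup>2))" for t
    unfolding line_density_eq[OF finite_lessThan] a_def b_def q_def C_def J_def ..
  have S_pos: "S > 0"
    unfolding S_def using k0 uk0 by (intro sum_pos2[of _ k0]) auto
  have "S = (u k0)\<^sup>2 + (\<Sum>j\<in>J. (u j)\<^sup>2)"
    unfolding S_def J_def using k0 by (simp add: sum.remove)
  then have a: "a = S / (u k0)\<^sup>2"
    unfolding a_def c_def using uk0 by (simp add: field_simps power_divide sum_divide_distrib[symmetric])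
  have "0 < a" "0 \<le> C" by (simp_all add: a_def C_def add_pos_nonneg sum_nonneg)
  from nn_integral_gaussian_weight_affine_sq_ge[OF \<sigma> this, of "S / u k0" b q \<beta>]
  have "ennreal ((S / u k0)\<^sup>2 * \<sigma>\<^sup>2 / a) * (\<integral>\<^sup>+t. ennreal (line_density \<sigma> {..<n} k0 c \<eta> t) \<partial>lborel)
      \<le> (\<integral>\<^sup>+t. ennreal ((S / u k0 * t + \<beta>)\<^sup>2) * ennreal (line_density \<sigma> {..<n} k0 c \<eta> t) \<partial>lborel)"
    unfolding density using \<open>0 \<le> C\<close> by (simp add: ennreal_mult[symmetric] mult_ac)
  moreover have "(S / u k0)\<^sup>2 * \<sigma>\<^sup>2 / a = \<sigma>\<^sup>2 * S"
    unfolding a using uk0 S_pos by (simp add: field_simps power2_eq_square)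
  ultimately show ?thesis unfolding residual S_def by simp
qed

lemma nn_integral_gaussian_residual_ge:
  fixes \<sigma> :: real and u :: "nat \<Rightarrow> real" and A :: "nat \<Rightarrow> nat \<Rightarrow> real"
    and h :: "(nat \<Rightarrow> real) \<Rightarrow> real"
  assumes \<sigma>: "\<sigma> > 0" and orth: "\<And>j. j < m \<Longrightarrow> (\<Sum>k<n. A j k * u k) = 0"
    and h[measurable]: "h \<in> borel_measurable (PiM {..<m} (\<lambda>_. borel))"
  shows "ennreal (\<sigma>\<^sup>2 * (\<Sum>k<n. (u k)\<^sup>2))
    \<le> (\<integral>\<^sup>+\<xi>. ennreal (((\<Sum>k<n. u k * \<xi> k) + h (\<lambda>j\<in>{..<m}. \<Sum>k<n. A j k * \<xi> k))\<^sup>2)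
         \<partial>PiM {..<n} (\<lambda>_. centered_normal \<sigma>))"
proof (cases "\<forall>k<n. u k = 0")
  case True then show ?thesis by simp
next
  case False
  then obtain k0 where k0: "k0 < n" and uk0: "u k0 \<noteq> 0" by auto
  define c where "c = (\<lambda>j. u j / u k0)"
  define J where "J = {..<n} - {k0}"
  define F where "F \<xi> = ennreal (((\<Sum>k<n. u k * \<xi> k) + h (\<lambda>j\<in>{..<m}. \<Sum>k<n. A j k * \<xi> k))\<^sup>2)" for \<xi>
  let ?\<rho> = "\<lambda>\<eta> t. ennreal (line_density \<sigma> {..<n} k0 c \<eta> t)"
  have "F \<in> borel_measurable (PiM {..<n} (\<lambda>_. borel))"
    unfolding F_def by measurable
  from nn_integral_PiM_centered_normal_lines[OF \<sigma> _ _ this, of k0 c]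
  have disint: "(\<integral>\<^sup>+\<xi>. F \<xi> \<partial>PiM {..<n} (\<lambda>_. centered_normal \<sigma>))
      = (\<integral>\<^sup>+\<eta>. (\<integral>\<^sup>+t. F (line_point {..<n} k0 c \<eta> t) * ?\<rho> \<eta> t \<partial>lborel) \<partial>PiM J (\<lambda>_. lborel))"
    using k0 unfolding J_def by simp
  have "prob_space (PiM {..<n} (\<lambda>_. centered_normal \<sigma>))"
    by (intro prob_space_PiM prob_space_normal_density[OF \<sigma>])
  with nn_integral_PiM_centered_normal_lines[OF \<sigma> _ _ borel_measurable_const, of "{..<n}" k0 1 c]
  have mass: "(\<integral>\<^sup>+\<eta>. (\<integral>\<^sup>+t. ?\<rho> \<eta> t \<partial>lborel) \<partial>PiM J (\<lambda>_. lborel)) = 1"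
    using k0 unfolding J_def by (simp add: prob_space.emeasure_space_1)
  have "(\<lambda>(\<eta>, t). ?\<rho> \<eta> t) \<in> borel_measurable (PiM J (\<lambda>_. lborel) \<Otimes>\<^sub>M lborel)"
    unfolding line_density_def J_def by measurable
  then have "(\<lambda>\<eta>. \<integral>\<^sup>+t. ?\<rho> \<eta> t \<partial>lborel) \<in> borel_measurable (PiM J (\<lambda>_. lborel))"
    by (rule lborel.borel_measurable_nn_integral)
  then have "ennreal (\<sigma>\<^sup>2 * (\<Sum>k<n. (u k)\<^sup>2))
      = (\<integral>\<^sup>+\<eta>. ennreal (\<sigma>\<^sup>2 * (\<Sum>k<n. (u k)\<^sup>2)) * (\<integral>\<^sup>+t. ?\<rho> \<eta> t \<partial>lborel) \<partial>PiM J (\<lambda>_. lborel))"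
    by (simp add: nn_integral_cmult mass)
  also have "\<dots> \<le> (\<integral>\<^sup>+\<eta>. (\<integral>\<^sup>+t. F (line_point {..<n} k0 c \<eta> t) * ?\<rho> \<eta> t \<partial>lborel) \<partial>PiM J (\<lambda>_. lborel))"
    using nn_integral_line_residual_ge[where A=A and m=m, OF \<sigma> k0 uk0 orth]
    unfolding F_def c_def by (intro nn_integral_mono) simp
  also have "\<dots> = (\<integral>\<^sup>+\<xi>. F \<xi> \<partial>PiM {..<n} (\<lambda>_. centered_normal \<sigma>))"
    by (rule disint[symmetric])
  finally show ?thesis unfolding F_def .
qed

text \<open>The residual \<open>x - (w/d) y\<^sub>i\<close> of the regression of \<open>x\<close> on \<open>y\<^sub>i\<close> is orthogonal to all readout
  vectors and has squared norm \<open>|x|\<^sup>2 - w\<^sup>2/d\<close>.\<close>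
lemma nn_integral_gaussian_estimation_error_ge:
  fixes \<sigma> d w :: real and x :: "nat \<Rightarrow> real" and y :: "nat \<Rightarrow> nat \<Rightarrow> real"
    and \<phi> :: "(nat \<Rightarrow> real) \<Rightarrow> real"
  assumes \<sigma>: "\<sigma> > 0" and i: "i < m" and d: "d > 0"
    and yy: "(\<Sum>k<n. y i k * y i k) = d" and xy: "(\<Sum>k<n. x k * y i k) = w"
    and x_orth: "\<And>j. j < m \<Longrightarrow> j \<noteq> i \<Longrightarrow> (\<Sum>k<n. x k * y j k) = 0"
    and y_orth: "\<And>j. j < m \<Longrightarrow> j \<noteq> i \<Longrightarrow> (\<Sum>k<n. y i k * y j k) = 0"
    and \<phi>[measurable]: "\<phi> \<in> borel_measurable (PiM {..<m} (\<lambda>_. borel))"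
  shows "ennreal (\<sigma>\<^sup>2 * ((\<Sum>k<n. (x k)\<^sup>2) - w\<^sup>2 / d))
    \<le> (\<integral>\<^sup>+\<xi>. ennreal (((\<Sum>k<n. x k * \<xi> k) - \<phi> (\<lambda>j\<in>{..<m}. \<Sum>k<n. y j k * \<xi> k))\<^sup>2)
         \<partial>PiM {..<n} (\<lambda>_. centered_normal \<sigma>))"
proof -
  define \<beta> where "\<beta> = w / d"
  define u where "u k = x k - \<beta> * y i k" for k
  define h where "h v = \<beta> * v i - \<phi> v" for v :: "nat \<Rightarrow> real"
  have inner_u: "(\<Sum>k<n. z k * u k) = (\<Sum>k<n. x k * z k) - \<beta> * (\<Sum>k<n. y i k * z k)" for z
    unfolding u_def by (simp add: algebra_simps sum_subtractf sum_distrib_left)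
  have orth: "(\<Sum>k<n. y j k * u k) = 0" if "j < m" for j
  proof (cases "j = i")
    case True
    then show ?thesis using d xy yy by (simp add: inner_u \<beta>_def)
  next
    case False
    then show ?thesis unfolding inner_u using x_orth y_orth that by simp
  qed
  have "(\<lambda>v. v i) \<in> borel_measurable (PiM {..<m} (\<lambda>_. borel::real measure))"
    using measurable_component_singleton[of i "{..<m}" "\<lambda>_. borel"] i by simp
  then have "h \<in> borel_measurable (PiM {..<m} (\<lambda>_. borel))"
    unfolding h_def by measurable
  note residual = nn_integral_gaussian_residual_ge[where A=y, OF \<sigma> orth this]
  have yx: "(\<Sum>k<n. y i k * x k) = w"
    using xy by (simp add: mult.commute)
  have "(\<Sum>k<n. (u k)\<^sup>2) = (\<Sum>k<n. x k * u k) - \<beta> * (\<Sum>k<n. y i k * u k)"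
    unfolding u_def by (simp add: power2_eq_square algebra_simps sum_subtractf sum.distrib sum_distrib_left)
  also have "\<dots> = (\<Sum>k<n. (x k)\<^sup>2) - w\<^sup>2 / d"
    using d unfolding inner_u xy yx yy \<beta>_def by (simp add: power2_eq_square field_simps)
  finally have norm_u: "(\<Sum>k<n. (u k)\<^sup>2) = (\<Sum>k<n. (x k)\<^sup>2) - w\<^sup>2 / d" .
  have "(\<Sum>k<n. u k * \<xi> k) + h (\<lambda>j\<in>{..<m}. \<Sum>k<n. y j k * \<xi> k)
      = (\<Sum>k<n. x k * \<xi> k) - \<phi> (\<lambda>j\<in>{..<m}. \<Sum>k<n. y j k * \<xi> k)" for \<xi>
    using inner_u[of \<xi>] i unfolding h_def by (simp add: mult.commute)
  then show ?thesis using residual unfolding norm_u by simp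
qed

lemma TG_carrier_mat: "TG N M G \<in> carrier_mat (2*(N+M)) (2*(N+M))"
  by (simp add: TG_def)

lemma TG_data_row_mult:
  assumes "i < 2*N" "N \<le> M"
  shows "(\<Sum>c<2*(N+M). TG N M G $$ (i,c) * X c)
    = sqrt (G (i div 2)) * X i + sqrt (G (i div 2) - 1) * zsgn (i mod 2) * X (2*N+i)"
proof -
  have "(\<Sum>c<2*(N+M). TG N M G $$ (i,c) * X c)
      = (\<Sum>c<2*(N+M). (if c = i then sqrt (G (i div 2)) * X i else 0)
          + (if c = 2*N+i then sqrt (G (i div 2) - 1) * zsgn (i mod 2) * X (2*N+i) else 0))"
    using assms by (intro sum.cong) (auto simp: TG_def)
  then show ?thesis using assms by (simp add: sum.distrib)
qed

lemma TG_ancilla_row_mult: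
  assumes "j < 2*M"
  shows "(\<Sum>c<2*(N+M). TG N M G $$ (2*N+j,c) * X c)
    = (if j < 2*N then sqrt (G (j div 2)) * X (2*N+j) + sqrt (G (j div 2) - 1) * zsgn (j mod 2) * X j
       else X (2*N+j))"
proof -
  have "(\<Sum>c<2*(N+M). TG N M G $$ (2*N+j,c) * X c)
      = (\<Sum>c<2*(N+M). (if c = 2*N+j then (if j < 2*N then sqrt (G (j div 2)) else 1) * X (2*N+j) else 0)
          + (if j < 2*N \<and> c = j then sqrt (G (j div 2) - 1) * zsgn (j mod 2) * X j else 0))"
    using assms by (intro sum.cong) (auto simp: TG_def)
  then show ?thesis using assms by (simp add: sum.distrib)
qed

lemma TG_row_inner:
  assumes i: "i < 2*N" and NM: "N \<le> M" and G1: "G (i div 2) \<ge> 1"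
  defines "Q \<equiv> \<lambda>r s. (\<Sum>c<2*(N+M). TG N M G $$ (r,c) * TG N M G $$ (s,c))"
  shows "Q i i = 2 * G (i div 2) - 1"
    and "Q (2*N+i) (2*N+i) = 2 * G (i div 2) - 1"
    and "(Q i (2*N+i))\<^sup>2 = 4 * G (i div 2) * (G (i div 2) - 1)"
    and "\<And>j. j < 2*M \<Longrightarrow> j \<noteq> i \<Longrightarrow> Q i (2*N+j) = 0"
    and "\<And>j. j < 2*M \<Longrightarrow> j \<noteq> i \<Longrightarrow> Q (2*N+i) (2*N+j) = 0"
proof -
  let ?g = "G (i div 2)" and ?z = "zsgn (i mod 2)"
  have iM: "i < 2*M" using i NM by simp
  have roots: "sqrt ?g * sqrt ?g = ?g" "sqrt (?g - 1) * sqrt (?g - 1) = ?g - 1"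
      "\<bar>?g\<bar> = ?g" "\<bar>?g - 1\<bar> = ?g - 1"
    using G1 by auto
  have z2: "?z * ?z = 1" "?z\<^sup>2 = 1" by (simp_all add: zsgn_def)
  have data: "Q i s = sqrt ?g * TG N M G $$ (s,i) + sqrt (?g - 1) * ?z * TG N M G $$ (s,2*N+i)" for s
    unfolding Q_def using TG_data_row_mult[OF i NM] .
  have ancilla: "Q (2*N+i) s = sqrt ?g * TG N M G $$ (s,2*N+i) + sqrt (?g - 1) * ?z * TG N M G $$ (s,i)" for s
    unfolding Q_def using TG_ancilla_row_mult[OF iM] i by simp
  have entries: "TG N M G $$ (i,i) = sqrt ?g" "TG N M G $$ (i,2*N+i) = sqrt (?g - 1) * ?z"
    "TG N M G $$ (2*N+i,2*N+i) = sqrt ?g" "TG N M G $$ (2*N+i,i) = sqrt (?g - 1) * ?z"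
    using i NM by (auto simp: TG_def)
  have others: "TG N M G $$ (2*N+j,i) = 0" "TG N M G $$ (2*N+j,2*N+i) = 0"
    if "j < 2*M" "j \<noteq> i" for j
    using i NM that by (auto simp: TG_def)
  show "Q i i = 2 * ?g - 1" "Q (2*N+i) (2*N+i) = 2 * ?g - 1"
    unfolding data ancilla entries by (simp_all add: algebra_simps roots z2 mult.assoc[symmetric])
  have "Q i (2*N+i) = 2 * sqrt ?g * sqrt (?g - 1) * ?z"
    unfolding data entries by (simp add: algebra_simps)
  then show "(Q i (2*N+i))\<^sup>2 = 4 * ?g * (?g - 1)"
    using G1 z2 by (simp add: power_mult_distrib)
  show "Q i (2*N+j) = 0" "Q (2*N+i) (2*N+j) = 0" if "j < 2*M" "j \<noteq> i" for j
    unfolding data ancilla others[OF that] by simp_all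
qed

lemma row_inner_eq_of_gram_eq:
  fixes A B :: "real mat"
  assumes "A \<in> carrier_mat n p" "B \<in> carrier_mat n q" "A * transpose_mat A = B * transpose_mat B"
    and "r < n" "s < n"
  shows "(\<Sum>k<p. A $$ (r,k) * A $$ (s,k)) = (\<Sum>k<q. B $$ (r,k) * B $$ (s,k))"
proof -
  have "(A * transpose_mat A) $$ (r,s) = (\<Sum>k<p. A $$ (r,k) * A $$ (s,k))"
    "(B * transpose_mat B) $$ (r,s) = (\<Sum>k<q. B $$ (r,k) * B $$ (s,k))"
    using assms(1,2,4,5) by (simp_all add: scalar_prod_def atLeast0LessThan)
  with assms(3) show ?thesis by simp
qed

lemma dsum_carrier_mat:
  "A \<in> carrier_mat n n \<Longrightarrow> B \<in> carrier_mat m m \<Longrightarrow> dsum A B \<in> carrier_mat (n+m) (n+m)"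
  unfolding dsum_def by (rule four_block_carrier_mat) auto

lemma data_coordinate_error_ge:
  fixes L :: "real mat" and \<phi> :: "(nat \<Rightarrow> real) \<Rightarrow> real"
  assumes \<sigma>: "\<sigma> > 0" and NM: "N \<le> M" and i: "i < 2*N" and G1: "G (i div 2) \<ge> 1"
    and L: "L \<in> carrier_mat (2*(N+M)) (2*(N+M))"
    and gram: "L * transpose_mat L = TG N M G * transpose_mat (TG N M G)"
    and \<phi>: "\<phi> \<in> borel_measurable (PiM {..<2*M} (\<lambda>_. borel))"
  shows "ennreal (\<sigma>\<^sup>2 / (2 * G (i div 2) - 1))
    \<le> (\<integral>\<^sup>+\<xi>. ennreal (((\<Sum>k<2*(N+M). L $$ (i,k) * \<xi> k)
            - \<phi> (\<lambda>j\<in>{..<2*M}. \<Sum>k<2*(N+M). L $$ (2*N+j,k) * \<xi> k))\<^sup>2)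
         \<partial>PiM {..<2*(N+M)} (\<lambda>_. centered_normal \<sigma>))"
proof -
  let ?g = "G (i div 2)"
  have inner: "(\<Sum>k<2*(N+M). L $$ (r,k) * L $$ (s,k))
      = (\<Sum>c<2*(N+M). TG N M G $$ (r,c) * TG N M G $$ (s,c))"
    if "r < 2*(N+M)" "s < 2*(N+M)" for r s
    using row_inner_eq_of_gram_eq[OF L TG_carrier_mat gram that] .
  have rows: "i < 2*(N+M)" "i < 2*M" "2*N + j < 2*(N+M) \<longleftrightarrow> j < 2*M" for j
    using i NM by auto
  note Q = TG_row_inner[where G=G, OF i NM G1]
  define w where "w = (\<Sum>k<2*(N+M). L $$ (i,k) * L $$ (2*N+i,k))"
  have d: "0 < 2 * ?g - 1" using G1 by simp
  have "ennreal (\<sigma>\<^sup>2 * ((\<Sum>k<2*(N+M). (L $$ (i,k))\<^sup>2) - w\<^sup>2 / (2 * ?g - 1)))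
      \<le> (\<integral>\<^sup>+\<xi>. ennreal (((\<Sum>k<2*(N+M). L $$ (i,k) * \<xi> k)
            - \<phi> (\<lambda>j\<in>{..<2*M}. \<Sum>k<2*(N+M). L $$ (2*N+j,k) * \<xi> k))\<^sup>2)
         \<partial>PiM {..<2*(N+M)} (\<lambda>_. centered_normal \<sigma>))"
  proof (rule nn_integral_gaussian_estimation_error_ge[OF \<sigma> _ d])
    show "i < 2*M" by (rule rows(2))
    show "(\<Sum>k<2*(N+M). L $$ (2*N+i,k) * L $$ (2*N+i,k)) = 2 * ?g - 1"
      using inner[of "2*N+i" "2*N+i"] Q(2) rows by simp
    show "(\<Sum>k<2*(N+M). L $$ (i,k) * L $$ (2*N+i,k)) = w"
      unfolding w_def ..
    show "(\<Sum>k<2*(N+M). L $$ (i,k) * L $$ (2*N+j,k)) = 0" if "j < 2*M" "j \<noteq> i" for j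
      using inner[of i "2*N+j"] Q(4)[OF that] rows that by simp
    show "(\<Sum>k<2*(N+M). L $$ (2*N+i,k) * L $$ (2*N+j,k)) = 0" if "j < 2*M" "j \<noteq> i" for j
      using inner[of "2*N+i" "2*N+j"] Q(5)[OF that] rows that by simp
  qed (rule \<phi>)
  moreover have "(\<Sum>k<2*(N+M). (L $$ (i,k))\<^sup>2) = 2 * ?g - 1"
    using inner[OF rows(1) rows(1)] Q(1) by (simp add: power2_eq_square)
  moreover have "w\<^sup>2 = 4 * ?g * (?g - 1)"
    using inner[of i "2*N+i"] Q(3) rows unfolding w_def by simp
  moreover have "(2 * ?g - 1) - 4 * ?g * (?g - 1) / (2 * ?g - 1) = 1 / (2 * ?g - 1)"
    using d by (simp add: field_simps)
  ultimately show ?thesis by simp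
qed

lemma nn_integral_sum_ge:
  fixes b :: "'i \<Rightarrow> real" and g :: "'i \<Rightarrow> 'a \<Rightarrow> real"
  assumes "finite I" and "\<And>i. i \<in> I \<Longrightarrow> 0 \<le> b i" and "\<And>i x. i \<in> I \<Longrightarrow> 0 \<le> g i x"
    and "\<And>i. i \<in> I \<Longrightarrow> g i \<in> borel_measurable M"
    and "\<And>i. i \<in> I \<Longrightarrow> ennreal (b i) \<le> (\<integral>\<^sup>+x. ennreal (g i x) \<partial>M)"
  shows "ennreal (\<Sum>i\<in>I. b i) \<le> (\<integral>\<^sup>+x. ennreal (\<Sum>i\<in>I. g i x) \<partial>M)"
proof -
  have "ennreal (\<Sum>i\<in>I. b i) = (\<Sum>i\<in>I. ennreal (b i))"
    using assms(2) by (simp add: sum_ennreal)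
  also have "\<dots> \<le> (\<Sum>i\<in>I. \<integral>\<^sup>+x. ennreal (g i x) \<partial>M)"
    using assms(5) by (rule sum_mono)
  also have "\<dots> = (\<integral>\<^sup>+x. (\<Sum>i\<in>I. ennreal (g i x)) \<partial>M)"
    using assms(1,4) by (intro nn_integral_sum[symmetric]) auto
  also have "\<dots> = (\<integral>\<^sup>+x. ennreal (\<Sum>i\<in>I. g i x) \<partial>M)"
    using assms(3) by (intro nn_integral_cong) (simp add: sum_ennreal)
  finally show ?thesis .
qed

lemma sum_lessThan_double_div2:
  fixes g :: "nat \<Rightarrow> real" shows "(\<Sum>i<2*n. g (i div 2)) = (\<Sum>i<n. 2 * g i)"
  by (induction n) (simp_all add: sum.lessThan_Suc)

lemma decoding_error_ge:
  fixes L :: "real mat" and f :: "(nat \<Rightarrow> real) \<Rightarrow> (nat \<Rightarrow> real)"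
  assumes \<sigma>: "\<sigma> > 0" and NM: "N \<le> M" and G1: "\<And>i. i < N \<Longrightarrow> G i \<ge> 1"
    and L: "L \<in> carrier_mat (2*(N+M)) (2*(N+M))"
    and gram: "L * transpose_mat L = TG N M G * transpose_mat (TG N M G)"
    and f[measurable]: "f \<in> PiM {..<2*M} (\<lambda>_. borel) \<rightarrow>\<^sub>M PiM {..<2*N} (\<lambda>_. borel)"
  defines "ya \<equiv> \<lambda>\<xi>. \<lambda>j\<in>{..<2*M}. \<Sum>k<2*(N+M). L $$ (2*N+j,k) * \<xi> k"
  shows "ennreal (\<Sum>i<N. 2 * \<sigma>\<^sup>2 / (2 * G i - 1))
    \<le> (\<integral>\<^sup>+\<xi>. ennreal (\<Sum>i<2*N. ((\<Sum>k<2*(N+M). L $$ (i,k) * \<xi> k) - f (ya \<xi>) i)\<^sup>2)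
         \<partial>PiM {..<2*(N+M)} (\<lambda>_. centered_normal \<sigma>))"
proof -
  have ya: "ya \<in> PiM {..<2*(N+M)} (\<lambda>_. borel) \<rightarrow>\<^sub>M PiM {..<2*M} (\<lambda>_. borel)"
    unfolding ya_def by measurable
  have coordinate: "(\<lambda>\<xi>. ((\<Sum>k<2*(N+M). L $$ (i,k) * \<xi> k) - f (ya \<xi>) i)\<^sup>2)
        \<in> borel_measurable (PiM {..<2*(N+M)} (\<lambda>_. centered_normal \<sigma>))"
    "ennreal (\<sigma>\<^sup>2 / (2 * G (i div 2) - 1))
        \<le> (\<integral>\<^sup>+\<xi>. ennreal (((\<Sum>k<2*(N+M). L $$ (i,k) * \<xi> k) - f (ya \<xi>) i)\<^sup>2)
             \<partial>PiM {..<2*(N+M)} (\<lambda>_. centered_normal \<sigma>))"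
    if i: "i < 2*N" for i
  proof -
    have \<phi>: "(\<lambda>v. f v i) \<in> borel_measurable (PiM {..<2*M} (\<lambda>_. borel))"
      using measurable_compose[OF f measurable_component_singleton[of i "{..<2*N}" "\<lambda>_. borel"]] i
      by simp
    show "ennreal (\<sigma>\<^sup>2 / (2 * G (i div 2) - 1))
        \<le> (\<integral>\<^sup>+\<xi>. ennreal (((\<Sum>k<2*(N+M). L $$ (i,k) * \<xi> k) - f (ya \<xi>) i)\<^sup>2)
             \<partial>PiM {..<2*(N+M)} (\<lambda>_. centered_normal \<sigma>))"
      using data_coordinate_error_ge[OF \<sigma> NM i _ L gram \<phi>] G1 i unfolding ya_def by simp
    have "(\<lambda>\<xi>. f (ya \<xi>) i) \<in> borel_measurable (PiM {..<2*(N+M)} (\<lambda>_. borel))"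
      using measurable_compose[OF ya \<phi>] by simp
    then show "(\<lambda>\<xi>. ((\<Sum>k<2*(N+M). L $$ (i,k) * \<xi> k) - f (ya \<xi>) i)\<^sup>2)
        \<in> borel_measurable (PiM {..<2*(N+M)} (\<lambda>_. centered_normal \<sigma>))"
      by measurable
  qed
  have nonneg: "0 \<le> \<sigma>\<^sup>2 / (2 * G (i div 2) - 1)" if "i < 2*N" for i
  proof -
    have "G (i div 2) \<ge> 1" using G1 that by simp
    then show ?thesis by simp
  qed
  have modes_to_coordinates:
    "(\<Sum>i<N. 2 * \<sigma>\<^sup>2 / (2 * G i - 1)) = (\<Sum>i<2*N. \<sigma>\<^sup>2 / (2 * G (i div 2) - 1))"
    using sum_lessThan_double_div2[of "\<lambda>i. \<sigma>\<^sup>2 / (2 * G i - 1)" N] by simp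
  show ?thesis
    unfolding modes_to_coordinates using nonneg coordinate by (intro nn_integral_sum_ge) simp_all
qed

theorem theorem2:
  fixes N M K :: nat and \<sigma> :: real
    and S_enc S_inv Lam_d Lam_a :: "real mat" and G :: "nat \<Rightarrow> real"
    and f :: "(nat \<Rightarrow> real) \<Rightarrow> (nat \<Rightarrow> real)"
  assumes "N \<ge> 1" and "M \<ge> N" and "K = N + M" and "\<sigma> > 0"
    and "symplectic K S_enc"
    and "S_inv \<in> carrier_mat (2*K) (2*K)" and "S_inv * S_enc = 1\<^sub>m (2*K)"
    and "symplectic N Lam_d" and "symplectic M Lam_a"
    and "\<And>i. i < N \<Longrightarrow> G i \<ge> 1"
    and "dsum Lam_d Lam_a * S_inv * transpose_mat S_inv * transpose_mat (dsum Lam_d Lam_a)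
           = TG N M G * transpose_mat (TG N M G)"
    and "f \<in> (\<Pi>\<^sub>M j\<in>{..<2*M}. borel) \<rightarrow>\<^sub>M (\<Pi>\<^sub>M i\<in>{..<2*N}. borel)"
  shows "(\<integral>\<^sup>+ \<xi>. ennreal (\<Sum>i<2*N.
            ((\<Sum>k<2*K. (dsum Lam_d Lam_a * S_inv) $$ (i,k) * \<xi> k)
             - f (\<lambda>j\<in>{..<2*M}. \<Sum>k<2*K. (dsum Lam_d Lam_a * S_inv) $$ (2*N+j,k) * \<xi> k) i)\<^sup>2)
          \<partial>(\<Pi>\<^sub>M k\<in>{..<2*K}. density lborel (normal_density 0 \<sigma>)))
         \<ge> ennreal (\<Sum>i<N. 2 * \<sigma>\<^sup>2 / (2 * G i - 1))"
proof -
  define D where "D = dsum Lam_d Lam_a"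
  define L where "L = D * S_inv"
  have D: "D \<in> carrier_mat (2*K) (2*K)"
    using assms(3,8,9) dsum_carrier_mat unfolding D_def symplectic_def by (fastforce simp: add_mult_distrib2)
  with assms(6) have L: "L \<in> carrier_mat (2*K) (2*K)"
    unfolding L_def by simp
  have "L * transpose_mat L = D * S_inv * transpose_mat S_inv * transpose_mat D"
    using D assms(6) unfolding L_def
    by (simp add: transpose_mult assoc_mult_mat[of _ "2*K" "2*K" _ "2*K" _ "2*K"])
  then have "L * transpose_mat L = TG N M G * transpose_mat (TG N M G)"
    using assms(11) unfolding D_def by simp
  from decoding_error_ge[OF assms(4,2,10) L[unfolded assms(3)] this assms(12)]
  show ?thesis unfolding L_def D_def assms(3) by simp
qed

end
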